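(* For each even integer $L\ge 2$ there is an irrational number $x=[a_0,a_1,a_2,\ldots]$ with all $a_i\in\{1,2,3,4\}$ and eventually periodic sequence of partial quotients, such that its Jacobi sequence is eventually periodic with repeating block $1,1,\ldots,1,-1$ of length $L$ (the value $1$ repeated $L-1$ times followed by $-1$). Furthermore, there are uncountably many distinct Jacobi sequences that are not eventually periodic and that are Jacobi sequences of irrational numbers $x=[a_0,a_1,a_2,\ldots]$ with all $a_i\in\{1,2,3,4\}$.
   Context: For $x\in\mathbb{R}\setminus\mathbb{Q}$ with regular continued fraction expansion $x=[a_0,a_1,a_2,\ldots]$, the convergents $s_k/t_k$ are defined by $s_{-1}=1$, $s_0=a_0$, $s_k=a_ks_{k-1}+s_{k-2}$ and $t_{-1}=0$, $t_0=1$, $t_k=a_kt_{k-1}+t_{k-2}$ for $k\ge1$. For an odd natural number $n$ and an integer $m$ coprime to $n$, $\left(\frac{m}{n}\right)$ is the usual Jacobi symbol (equal to $1$ if $n=1$); if $n$ is even and $\gcd(m,n)=1$, one sets $\left(\frac{m}{n}\right)=*$, a fixed symbol different from $\pm1$. The Jacobi sequence of $x$ is $\left(\frac{s_k}{t_k}\right)$, $k\ge 0$. *)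

theory Defs
  imports Complex_Main "HOL-Number_Theory.Number_Theory" "HOL-Library.Countable_Set"
begin

fun cf_rem :: "real \<Rightarrow> nat \<Rightarrow> real" where
  "cf_rem x 0 = x"
| "cf_rem x (Suc k) = 1 / (cf_rem x k - of_int \<lfloor>cf_rem x k\<rfloor>)"

definition cf_digit :: "real \<Rightarrow> nat \<Rightarrow> int" where
  "cf_digit x k = \<lfloor>cf_rem x k\<rfloor>"

fun cf_num :: "(nat \<Rightarrow> int) \<Rightarrow> nat \<Rightarrow> int" where
  "cf_num a 0 = a 0"
| "cf_num a (Suc 0) = a 1 * a 0 + 1"
| "cf_num a (Suc (Suc k)) = a (Suc (Suc k)) * cf_num a (Suc k) + cf_num a k"

fun cf_den :: "(nat \<Rightarrow> int) \<Rightarrow> nat \<Rightarrow> int" where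
  "cf_den a 0 = 1"
| "cf_den a (Suc 0) = a 1"
| "cf_den a (Suc (Suc k)) = a (Suc (Suc k)) * cf_den a (Suc k) + cf_den a k"

definition jacobi :: "int \<Rightarrow> int \<Rightarrow> int" where
  "jacobi m n = (\<Prod>p\<in>prime_factors n. Legendre m p ^ multiplicity p n)"

(* Jacobi sequence: Some (m/n) if n is odd, None represents the symbol * (n even) *)
definition jacobi_seq :: "real \<Rightarrow> nat \<Rightarrow> int option" where
  "jacobi_seq x k =
     (let s = cf_num (cf_digit x) k; t = cf_den (cf_digit x) k in
      if odd t then Some (jacobi s t) else None)"

definition eventually_periodic :: "(nat \<Rightarrow> 'a) \<Rightarrow> bool" where
  "eventually_periodic f \<longleftrightarrow> (\<exists>N P. P > 0 \<and> (\<forall>k\<ge>N. f (k + P) = f k))"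

end

theory Submission
  imports Defs
begin

text \<open>Take \<open>a\<^sub>0 = a\<^sub>1 = 1\<close> and \<open>a\<^sub>k \<in> {2, 4}\<close> for \<open>k \<ge> 2\<close>. Then all denominators \<open>t\<^sub>k\<close> are odd
  and \<open>t\<^sub>k\<^sub>+\<^sub>2 \<equiv> a\<^sub>k\<^sub>+\<^sub>2 + t\<^sub>k (mod 4)\<close>, so the digit \<open>2\<close> toggles \<open>t\<^sub>k mod 4\<close> between \<open>1\<close> and \<open>3\<close>
  while \<open>4\<close> keeps it; hence the set of \<open>k\<close> with \<open>t\<^sub>k \<equiv> 3 (mod 4)\<close> can be any prescribed set
  \<open>S\<close> of positive even numbers. Then no two consecutive \<open>t\<^sub>k\<close> are \<open>\<equiv> 3 (mod 4)\<close>, so Jacobi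
  reciprocity and \<open>t\<^sub>k\<^sub>+\<^sub>2 \<equiv> t\<^sub>k (mod t\<^sub>k\<^sub>+\<^sub>1)\<close> give \<open>(t\<^sub>k/t\<^sub>k\<^sub>+\<^sub>1) = 1\<close>, and
  \<open>s\<^sub>k t\<^sub>k\<^sub>-\<^sub>1 \<equiv> (-1)\<^sup>k\<^sup>-\<^sup>1 (mod t\<^sub>k)\<close> turns this into \<open>(s\<^sub>k/t\<^sub>k) = -1\<close> exactly for \<open>k \<in> S\<close>.
  The positive multiples of \<open>L\<close> give the periodic block; sets of powers of two encoding an
  arbitrary \<open>B \<subseteq> \<nat>\<close> give uncountably many Jacobi sequences that are not eventually
  periodic. Every sequence of positive partial quotients is the expansion of an irrational
  number, the limit of its convergents.\<close>

section \<open>Legendre and Jacobi symbols\<close>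

lemma jacobi_eq_prod_mset:
  "jacobi m n = prod_mset (image_mset (\<lambda>p. Legendre m p) (prime_factorization n))"
  unfolding jacobi_def image_prod_mset_multiplicity
  by (intro prod.cong) (auto simp: count_prime_factorization_prime in_prime_factors_imp_prime)

lemma jacobi_mult_right: "x \<noteq> 0 \<Longrightarrow> y \<noteq> 0 \<Longrightarrow> jacobi m (x * y) = jacobi m x * jacobi m y"
  by (simp add: jacobi_eq_prod_mset prime_factorization_mult)

lemma jacobi_prime_right: "prime (p::int) \<Longrightarrow> jacobi m p = Legendre m p"
  by (simp add: jacobi_eq_prod_mset prime_factorization_prime)

lemma jacobi_one_right [simp]: "jacobi m 1 = 1"
  by (simp add: jacobi_def)

lemma Legendre_one_left: "prime (p::int) \<Longrightarrow> Legendre 1 p = 1"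
  unfolding Legendre_def QuadRes_def
  by (auto simp: cong_def) (metis one_power2)

lemma jacobi_one_left [simp]: "jacobi 1 n = 1"
  unfolding jacobi_def
  by (intro prod.neutral) (simp add: Legendre_one_left in_prime_factors_imp_prime)

lemma Legendre_cong:
  assumes "[a = b] (mod p)"
  shows "Legendre a p = Legendre b p"
proof -
  have "[a = 0] (mod p) \<longleftrightarrow> [b = 0] (mod p)" "QuadRes p a \<longleftrightarrow> QuadRes p b"
    using assms unfolding QuadRes_def by (meson cong_sym cong_trans)+
  then show ?thesis by (simp add: Legendre_def)
qed

lemma jacobi_cong: "[a = b] (mod n) \<Longrightarrow> jacobi a n = jacobi b n"
  unfolding jacobi_def
  by (intro prod.cong refl arg_cong2[where f = power] Legendre_cong)
     (auto intro: cong_dvd_modulus)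

lemma euler_criterion_int:
  assumes "prime (p::int)" "p > 2"
  shows "[Legendre a p = a ^ nat ((p - 1) div 2)] (mod p)"
proof -
  have "prime (nat p)" "int (nat p) = p" "(nat p - 1) div 2 = nat ((p - 1) div 2)"
    using assms by auto
  then show ?thesis using euler_criterion[of "nat p" a] assms by auto
qed

lemma Legendre_eq_if_cong:
  assumes "c \<in> {-1, 0, 1}" "[Legendre a p = c] (mod p)" "p > 2"
  shows "Legendre a p = c"
proof (rule ccontr)
  assume "Legendre a p \<noteq> c"
  moreover have "p dvd Legendre a p - c" using assms(2) by (simp add: cong_iff_dvd_diff)
  ultimately have "\<bar>p\<bar> \<le> \<bar>Legendre a p - c\<bar>" by (intro dvd_imp_le_int) auto
  moreover have "Legendre a p \<in> {-1, 0, 1}" by (auto simp: Legendre_def)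
  ultimately show False using assms(1,3) by auto
qed

lemma Legendre_mult:
  assumes "prime (p::int)" "p > 2"
  shows "Legendre (a * b) p = Legendre a p * Legendre b p"
proof (rule Legendre_eq_if_cong[OF _ _ assms(2)])
  show "Legendre a p * Legendre b p \<in> {-1, 0, 1}" by (auto simp: Legendre_def)
  let ?e = "nat ((p - 1) div 2)"
  have "[Legendre (a * b) p = a ^ ?e * b ^ ?e] (mod p)"
    using euler_criterion_int[OF assms, of "a * b"] by (simp add: power_mult_distrib)
  moreover have "[a ^ ?e * b ^ ?e = Legendre a p * Legendre b p] (mod p)"
    using euler_criterion_int[OF assms] by (intro cong_mult) (auto simp: cong_sym)
  ultimately show "[Legendre (a * b) p = Legendre a p * Legendre b p] (mod p)"
    by (rule cong_trans)
qed

lemma Legendre_minus_one: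
  assumes "prime (p::int)" "p > 2"
  shows "Legendre (-1) p = (if p mod 4 = 3 then -1 else 1)"
proof (rule Legendre_eq_if_cong[OF _ _ assms(2)])
  have "odd p" using assms by (simp add: prime_odd_int)
  then have "even (nat ((p - 1) div 2)) \<longleftrightarrow> p mod 4 \<noteq> 3"
    using assms by (simp add: even_nat_iff) presburger
  then have "(-1::int) ^ nat ((p - 1) div 2) = (if p mod 4 = 3 then -1 else 1)"
    by (simp add: minus_one_power_iff)
  then show "[Legendre (-1) p = (if p mod 4 = 3 then -1 else 1)] (mod p)"
    using euler_criterion_int[OF assms, of "-1"] by simp
qed simp

lemma Legendre_reciprocity:
  assumes "prime (p::int)" "p > 2" "prime q" "q > 2" "p \<noteq> q"
  shows "Legendre p q * Legendre q p = (if p mod 4 = 3 \<and> q mod 4 = 3 then -1 else 1)"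
proof -
  have "odd p" "odd q" using assms by (simp_all add: prime_odd_int)
  have "Legendre p q * Legendre q p = (-1::int) ^ nat ((p - 1) div 2 * ((q - 1) div 2))"
    using assms by (intro Quadratic_Reciprocity_int) simp_all
  moreover have "even (nat ((p - 1) div 2 * ((q - 1) div 2))) \<longleftrightarrow>
                 even ((p - 1) div 2) \<or> even ((q - 1) div 2)"
    using assms by (simp add: even_nat_iff)
  moreover have "even ((p - 1) div 2) \<longleftrightarrow> p mod 4 \<noteq> 3" "even ((q - 1) div 2) \<longleftrightarrow> q mod 4 \<noteq> 3"
    using \<open>odd p\<close> \<open>odd q\<close> by presburger+
  ultimately show ?thesis by (simp add: minus_one_power_iff)
qed

lemma odd_pos_int_induct [consumes 2, case_names one prime_mult]:
  assumes "(n::int) > 0" "odd n" "P 1"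
    and "\<And>p x. prime p \<Longrightarrow> p > 2 \<Longrightarrow> x > 0 \<Longrightarrow> odd x \<Longrightarrow> P x \<Longrightarrow> P (p * x)"
  shows "P n"
proof -
  have "n > 0 \<longrightarrow> odd n \<longrightarrow> P n"
  proof (induction n rule: prime_divisors_induct)
    case (unit x)
    then have "x = 1 \<or> x = -1" by auto
    then show ?case using assms(3) by auto
  next
    case (factor p x)
    show ?case
    proof (intro impI)
      assume "p * x > 0" "odd (p * x)"
      moreover have "p > 0" "p \<noteq> 2" using factor(1) \<open>odd (p * x)\<close> by (auto simp: prime_gt_0_int)
      ultimately have "x > 0" "odd x" "p > 2"
        using prime_ge_2_int[OF factor(1)] by (auto simp: zero_less_mult_iff)
      then show "P (p * x)" using assms(4)[OF factor(1)] factor(2) by blast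
    qed
  qed simp
  then show ?thesis using assms by blast
qed

lemma jacobi_prime_mult_right:
  "prime (p::int) \<Longrightarrow> x \<noteq> 0 \<Longrightarrow> jacobi m (p * x) = Legendre m p * jacobi m x"
  by (simp add: jacobi_mult_right jacobi_prime_right)

lemma jacobi_mult_left:
  assumes "(n::int) > 0" "odd n"
  shows "jacobi (a * b) n = jacobi a n * jacobi b n"
  using assms
proof (induction n rule: odd_pos_int_induct)
  case (prime_mult p x)
  then show ?case by (simp add: jacobi_prime_mult_right Legendre_mult)
qed simp

lemma odd_mult_mod4_eq_3:
  assumes "odd (p::int)" "odd x"
  shows "(p * x) mod 4 = 3 \<longleftrightarrow> (p mod 4 = 3 \<longleftrightarrow> x mod 4 \<noteq> 3)"
proof -
  have "p mod 4 = 1 \<or> p mod 4 = 3" "x mod 4 = 1 \<or> x mod 4 = 3"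
    using assms by presburger+
  moreover have "(p * x) mod 4 = (p mod 4) * (x mod 4) mod 4" by (simp add: mod_mult_eq)
  ultimately show ?thesis by auto
qed

lemma jacobi_minus_one_left:
  assumes "(n::int) > 0" "odd n"
  shows "jacobi (-1) n = (if n mod 4 = 3 then -1 else 1)"
  using assms
proof (induction n rule: odd_pos_int_induct)
  case (prime_mult p x)
  then have "odd p" by (simp add: prime_odd_int)
  with prime_mult show ?case
    by (simp add: jacobi_prime_mult_right Legendre_minus_one odd_mult_mod4_eq_3)
qed simp

lemma jacobi_reciprocity_prime:
  assumes "prime (q::int)" "q > 2" "n > 0" "odd n" "coprime q n"
  shows "jacobi q n * jacobi n q = (if q mod 4 = 3 \<and> n mod 4 = 3 then -1 else 1)"
  using assms(3-5)
proof (induction n rule: odd_pos_int_induct)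
  case (prime_mult p x)
  then have "coprime q p" "coprime q x" by auto
  then have "p \<noteq> q" using assms(1) by (metis coprime_self not_prime_unit)
  have "odd p" using prime_mult by (simp add: prime_odd_int)
  have "jacobi q (p * x) = Legendre q p * jacobi q x"
    using prime_mult by (simp add: jacobi_prime_mult_right)
  moreover have "jacobi (p * x) q = Legendre p q * jacobi x q"
    using assms(1,2) by (simp add: jacobi_prime_right Legendre_mult)
  ultimately have "jacobi q (p * x) * jacobi (p * x) q
                   = (Legendre q p * Legendre p q) * (jacobi q x * jacobi x q)"
    by (simp only: ac_simps)
  also have "\<dots> = (if q mod 4 = 3 \<and> p mod 4 = 3 then -1 else 1)
                  * (if q mod 4 = 3 \<and> x mod 4 = 3 then -1 else 1)"
    using Legendre_reciprocity[of q p] prime_mult.IH[OF \<open>coprime q x\<close>]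
      assms(1,2) prime_mult.hyps(1,2) \<open>p \<noteq> q\<close>
    by simp
  finally show ?case using odd_mult_mod4_eq_3[OF \<open>odd p\<close> \<open>odd x\<close>] by auto
qed simp

lemma jacobi_reciprocity:
  assumes "(m::int) > 0" "odd m" "n > 0" "odd n" "coprime m n"
  shows "jacobi m n * jacobi n m = (if m mod 4 = 3 \<and> n mod 4 = 3 then -1 else 1)"
  using assms(1,2,5)
proof (induction m rule: odd_pos_int_induct)
  case (prime_mult p x)
  then have "coprime p n" "coprime x n" "odd p" by (auto simp: prime_odd_int)
  have "jacobi (p * x) n = jacobi p n * jacobi x n"
    using assms(3,4) by (rule jacobi_mult_left)
  moreover have "jacobi n (p * x) = jacobi n p * jacobi n x"
    using prime_mult by (simp add: jacobi_mult_right)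
  ultimately have "jacobi (p * x) n * jacobi n (p * x)
                   = (jacobi p n * jacobi n p) * (jacobi x n * jacobi n x)"
    by (simp only: ac_simps)
  also have "\<dots> = (if p mod 4 = 3 \<and> n mod 4 = 3 then -1 else 1)
                  * (if x mod 4 = 3 \<and> n mod 4 = 3 then -1 else 1)"
    using jacobi_reciprocity_prime[OF _ _ assms(3,4) \<open>coprime p n\<close>]
      prime_mult.IH[OF \<open>coprime x n\<close>] prime_mult.hyps(1,2)
    by simp
  finally show ?case using odd_mult_mod4_eq_3[OF \<open>odd p\<close> \<open>odd x\<close>] by auto
qed simp

section \<open>Jacobi symbols of convergents\<close>

lemma cf_num_den_det: "cf_num a (Suc k) * cf_den a k - cf_num a k * cf_den a (Suc k) = (-1) ^ k"
proof (induction k)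
  case (Suc k)
  have "cf_num a (Suc (Suc k)) * cf_den a (Suc k) - cf_num a (Suc k) * cf_den a (Suc (Suc k))
        = - (cf_num a (Suc k) * cf_den a k - cf_num a k * cf_den a (Suc k))"
    by (simp add: algebra_simps)
  then show ?case using Suc.IH by simp
qed simp

lemma coprime_cf_den_Suc: "coprime (cf_den a k) (cf_den a (Suc k))"
proof (rule coprimeI)
  fix c assume "c dvd cf_den a k" "c dvd cf_den a (Suc k)"
  then have "c dvd (-1) ^ k" unfolding cf_num_den_det[of a k, symmetric] by simp
  then show "is_unit c" by (rule dvd_unit_imp_unit) simp
qed

lemma cf_den_pos:
  assumes "\<And>i. 0 < a i"
  shows "0 < cf_den a k"
proof (induction k rule: induct_nat_012)
  case (ge2 k)
  then show ?case using assms[of "Suc (Suc k)"] by (simp add: add_pos_pos)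
qed (use assms[of 1] in simp_all)

lemma jacobi_cf_den_Suc:
  assumes pos: "\<And>i. 0 < a i" and odd: "\<And>k. odd (cf_den a k)"
    and not_both_3: "\<And>k. \<not> (cf_den a k mod 4 = 3 \<and> cf_den a (Suc k) mod 4 = 3)"
  shows "jacobi (cf_den a k) (cf_den a (Suc k)) = 1"
proof (induction k)
  case (Suc k)
  let ?t = "cf_den a"
  have "[?t (Suc (Suc k)) = ?t k] (mod ?t (Suc k))"
    by (simp add: cong_iff_dvd_diff)
  then have "jacobi (?t (Suc (Suc k))) (?t (Suc k)) = 1"
    using Suc.IH jacobi_cong by metis
  moreover have "jacobi (?t (Suc k)) (?t (Suc (Suc k))) * jacobi (?t (Suc (Suc k))) (?t (Suc k)) = 1"
    using jacobi_reciprocity[of "?t (Suc k)" "?t (Suc (Suc k))"] not_both_3[of "Suc k"]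
      cf_den_pos[OF pos] odd coprime_cf_den_Suc
    by (simp del: cf_den.simps)
  ultimately show ?case by simp
qed simp

lemma jacobi_cf_num_den:
  assumes pos: "\<And>i. 0 < a i" and odd: "\<And>k. odd (cf_den a k)"
    and not_both_3: "\<And>k. \<not> (cf_den a k mod 4 = 3 \<and> cf_den a (Suc k) mod 4 = 3)"
  shows "jacobi (cf_num a k) (cf_den a k) = (if even k \<and> cf_den a k mod 4 = 3 then -1 else 1)"
proof (cases k)
  case (Suc m)
  let ?s = "cf_num a" and ?t = "cf_den a"
  have t_pos: "0 < ?t (Suc m)" by (rule cf_den_pos[OF pos])
  have "?s (Suc m) * ?t m - (-1) ^ m = ?s m * ?t (Suc m)"
    using cf_num_den_det[of a m] by simp
  then have "[?s (Suc m) * ?t m = (-1) ^ m] (mod ?t (Suc m))"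
    by (simp add: cong_iff_dvd_diff)
  then have "jacobi (?s (Suc m)) (?t (Suc m)) * jacobi (?t m) (?t (Suc m))
             = jacobi ((-1) ^ m) (?t (Suc m))"
    using jacobi_cong jacobi_mult_left[OF t_pos odd] by metis
  then have "jacobi (?s (Suc m)) (?t (Suc m)) = jacobi ((-1) ^ m) (?t (Suc m))"
    using jacobi_cf_den_Suc[OF assms] by simp
  then show ?thesis
    using Suc jacobi_minus_one_left[OF t_pos odd] by (cases "even m") auto
qed simp

definition sign_digits :: "nat set \<Rightarrow> nat \<Rightarrow> int" where
  "sign_digits S k = (if k < 2 then 1 else if (k \<in> S) = (k - 2 \<in> S) then 4 else 2)"

lemma sign_digits_range: "sign_digits S k \<in> {1..4}"
  by (simp add: sign_digits_def)

lemma sign_digits_pos: "0 < sign_digits S k"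
  by (simp add: sign_digits_def)

lemma cf_den_sign_digits_mod_4:
  assumes S: "\<And>k. k \<in> S \<Longrightarrow> even k \<and> 0 < k"
  shows "cf_den (sign_digits S) k mod 4 = (if k \<in> S then 3 else 1)"
proof (induction k rule: induct_nat_012)
  case (ge2 k)
  let ?t = "cf_den (sign_digits S)"
  have "?t (Suc k) mod 4 = 1 \<or> ?t (Suc k) mod 4 = 3" using ge2.IH(2) by simp
  then have "odd (?t (Suc k))" by presburger
  have rec: "?t (Suc (Suc k)) = sign_digits S (Suc (Suc k)) * ?t (Suc k) + ?t k" by simp
  show ?case
  proof (cases "(Suc (Suc k) \<in> S) = (k \<in> S)")
    case True
    then have "?t (Suc (Suc k)) = 4 * ?t (Suc k) + ?t k" by (simp add: rec sign_digits_def)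
    then have "?t (Suc (Suc k)) mod 4 = ?t k mod 4" by presburger
    then show ?thesis using ge2.IH(1) True by (simp del: cf_den.simps)
  next
    case False
    then have "?t (Suc (Suc k)) = 2 * ?t (Suc k) + ?t k" by (simp add: rec sign_digits_def)
    then have "?t (Suc (Suc k)) mod 4 = (?t k + 2) mod 4" using \<open>odd (?t (Suc k))\<close> by presburger
    also have "\<dots> = (?t k mod 4 + 2) mod 4" by (simp add: mod_add_left_eq)
    finally show ?thesis using ge2.IH(1) False by (auto simp del: cf_den.simps)
  qed
qed (use S[of 0] S[of 1] in \<open>auto simp: sign_digits_def\<close>)

lemma jacobi_seq_sign_digits:
  assumes S: "\<And>k. k \<in> S \<Longrightarrow> even k \<and> 0 < k" and x: "cf_digit x = sign_digits S"
  shows "jacobi_seq x k = Some (if k \<in> S then -1 else 1)"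
proof -
  let ?t = "cf_den (sign_digits S)"
  have mod_4: "?t k mod 4 = (if k \<in> S then 3 else 1)" for k
    by (rule cf_den_sign_digits_mod_4[OF S])
  have odd: "odd (?t k)" for k
  proof -
    have "?t k mod 4 = 1 \<or> ?t k mod 4 = 3" using mod_4[of k] by simp
    then show ?thesis by presburger
  qed
  have "\<not> (?t k mod 4 = 3 \<and> ?t (Suc k) mod 4 = 3)" for k
    using mod_4[of k] mod_4[of "Suc k"] S[of k] S[of "Suc k"] by auto
  then have "jacobi (cf_num (sign_digits S) k) (?t k) = (if k \<in> S then -1 else 1)"
    using jacobi_cf_num_den[OF sign_digits_pos odd] mod_4[of k] S[of k] by auto
  then show ?thesis using odd x by (simp add: jacobi_seq_def)
qed

section \<open>Realising a sequence of positive partial quotients\<close>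

lemma Cauchy_if_dist_le:
  fixes X :: "nat \<Rightarrow> 'a::metric_space"
  assumes "\<And>m n. n \<le> m \<Longrightarrow> dist (X m) (X n) \<le> f n" and "f \<longlonglongrightarrow> 0"
  shows "Cauchy X"
proof (rule metric_CauchyI)
  fix e :: real assume "0 < e"
  then obtain M where M: "\<And>n. M \<le> n \<Longrightarrow> f n < e"
    using order_tendstoD(2)[OF assms(2)] by (auto simp: eventually_sequentially)
  have "dist (X m) (X n) < e" if "M \<le> m" "M \<le> n" for m n
  proof (cases "n \<le> m")
    case True
    then show ?thesis using assms(1)[OF True] M[OF \<open>M \<le> n\<close>] by simp
  next
    case False
    then show ?thesis using assms(1)[of m n] M[OF \<open>M \<le> m\<close>] by (simp add: dist_commute)
  qed
  then show "\<exists>M. \<forall>m\<ge>M. \<forall>n\<ge>M. dist (X m) (X n) < e" by blast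
qed

fun cf_eval :: "(nat \<Rightarrow> int) \<Rightarrow> nat \<Rightarrow> real \<Rightarrow> real" where
  "cf_eval a 0 z = z"
| "cf_eval a (Suc n) z = a 0 + 1 / cf_eval (\<lambda>i. a (Suc i)) n z"

lemma cf_eval_ge_1:
  assumes "\<And>i. 0 < a i" "1 \<le> z"
  shows "1 \<le> cf_eval a n z"
  using assms(1)
proof (induction n arbitrary: a)
  case (Suc n)
  have "1 \<le> cf_eval (\<lambda>i. a (Suc i)) n z" using Suc by simp
  then have "0 < 1 / cf_eval (\<lambda>i. a (Suc i)) n z" by simp
  moreover have "1 \<le> real_of_int (a 0)" using Suc.prems[of 0] by simp
  moreover have "cf_eval a (Suc n) z = a 0 + 1 / cf_eval (\<lambda>i. a (Suc i)) n z" by simp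
  ultimately show ?case by linarith
qed (use assms(2) in simp)

lemma cf_eval_add: "cf_eval a (n + k) z = cf_eval a n (cf_eval (\<lambda>i. a (i + n)) k z)"
  by (induction n arbitrary: a) simp_all

lemma dist_inverse_add_inverse:
  fixes b p q :: real
  assumes "1 \<le> b" "1 \<le> p" "1 \<le> q"
  shows "\<bar>1 / (b + 1 / p) - 1 / (b + 1 / q)\<bar> \<le> \<bar>p - q\<bar> / 4"
proof -
  have "1 \<le> b * p" "1 \<le> b * q" using mult_mono[of 1 b 1 p] mult_mono[of 1 b 1 q] assms by simp_all
  then have D: "4 \<le> (b * p + 1) * (b * q + 1)" using mult_mono[of 2 "b * p + 1" 2 "b * q + 1"] by simp
  have "b + 1 / p = (b * p + 1) / p" "b + 1 / q = (b * q + 1) / q"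
    using assms by (simp_all add: field_simps)
  then have "1 / (b + 1 / p) - 1 / (b + 1 / q) = p / (b * p + 1) - q / (b * q + 1)" by simp
  also have "\<dots> = (p * (b * q + 1) - q * (b * p + 1)) / ((b * p + 1) * (b * q + 1))"
    using \<open>1 \<le> b * p\<close> \<open>1 \<le> b * q\<close> by (simp add: diff_frac_eq)
  also have "p * (b * q + 1) - q * (b * p + 1) = p - q" by (simp add: algebra_simps)
  finally have "\<bar>1 / (b + 1 / p) - 1 / (b + 1 / q)\<bar> = \<bar>p - q\<bar> / ((b * p + 1) * (b * q + 1))"
    using D by simp
  also have "\<dots> \<le> \<bar>p - q\<bar> / 4" using D by (intro divide_left_mono) simp_all
  finally show ?thesis .
qed

lemma cf_eval_contract:
  assumes "\<And>i. 0 < a i" "1 \<le> z" "1 \<le> w"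
  shows "\<bar>cf_eval a n z - cf_eval a n w\<bar> \<le> 2 * \<bar>z - w\<bar> / 2 ^ n"
  using assms(1)
proof (induction n arbitrary: a rule: induct_nat_012)
  case 1
  have "\<bar>1 / z - 1 / w\<bar> = \<bar>z - w\<bar> / (z * w)" using assms by (simp add: field_simps)
  also have "\<dots> \<le> \<bar>z - w\<bar> / 1"
    using mult_mono[of 1 z 1 w] assms by (intro divide_left_mono) simp_all
  finally show ?case by simp
next
  case (ge2 k)
  let ?b = "\<lambda>i. a (Suc (Suc i))"
  have "1 \<le> cf_eval ?b k z" "1 \<le> cf_eval ?b k w"
    using cf_eval_ge_1[of ?b] ge2.prems assms(2,3) by simp_all
  moreover have "1 \<le> real_of_int (a 1)" using ge2.prems[of 1] by simp
  ultimately have "\<bar>1 / (a 1 + 1 / cf_eval ?b k z) - 1 / (a 1 + 1 / cf_eval ?b k w)\<bar>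
                   \<le> \<bar>cf_eval ?b k z - cf_eval ?b k w\<bar> / 4"
    by (intro dist_inverse_add_inverse)
  then have "\<bar>cf_eval a (Suc (Suc k)) z - cf_eval a (Suc (Suc k)) w\<bar>
             \<le> \<bar>cf_eval ?b k z - cf_eval ?b k w\<bar> / 4"
    by simp
  also have "\<dots> \<le> (2 * \<bar>z - w\<bar> / 2 ^ k) / 4"
    using ge2.IH(1)[of ?b] ge2.prems by (intro divide_right_mono) simp_all
  finally show ?case by simp
qed simp

lemma cf_eval_Cauchy_bound:
  assumes "\<And>i. 0 < a i" "n \<le> m"
  shows "\<bar>cf_eval a (Suc m) 1 - cf_eval a (Suc n) 1\<bar> \<le> 2 / 2 ^ n"
proof -
  let ?b = "\<lambda>i. a (i + n)"
  define T where "T = cf_eval (\<lambda>i. ?b (Suc i)) (m - n) 1"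
  have "1 \<le> T" unfolding T_def using assms(1) by (intro cf_eval_ge_1) simp_all
  have m: "cf_eval a (Suc m) 1 = cf_eval a n (a n + 1 / T)"
    using cf_eval_add[of a n "Suc (m - n)" 1] assms(2) by (simp add: T_def Suc_diff_le)
  have n: "cf_eval a (Suc n) 1 = cf_eval a n (of_int (a n) + 1)"
    using cf_eval_add[of a n 1 1] by simp
  have "1 \<le> real_of_int (a n)" using assms(1)[of n] by simp
  moreover have "0 < 1 / T" using \<open>1 \<le> T\<close> by simp
  ultimately have "1 \<le> a n + 1 / T" "1 \<le> real_of_int (a n) + 1" by linarith+
  then have "\<bar>cf_eval a (Suc m) 1 - cf_eval a (Suc n) 1\<bar>
             \<le> 2 * \<bar>(a n + 1 / T) - (of_int (a n) + 1)\<bar> / 2 ^ n"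
    unfolding m n by (rule cf_eval_contract[of a, OF assms(1)])
  also have "\<dots> \<le> 2 / 2 ^ n" using \<open>1 \<le> T\<close> by (simp add: divide_right_mono)
  finally show ?thesis .
qed

definition cf_value :: "(nat \<Rightarrow> int) \<Rightarrow> real" where
  "cf_value a = lim (\<lambda>n. cf_eval a (Suc n) 1)"

lemma cf_eval_tendsto_cf_value:
  assumes "\<And>i. 0 < a i"
  shows "(\<lambda>n. cf_eval a (Suc n) 1) \<longlonglongrightarrow> cf_value a"
proof -
  have "(\<lambda>n. 2 / 2 ^ n :: real) \<longlonglongrightarrow> 0"
    by (intro tendsto_divide_0[OF tendsto_const] filterlim_realpow_sequentially_gt1) simp
  then have "Cauchy (\<lambda>n. cf_eval a (Suc n) 1)"
    using cf_eval_Cauchy_bound[of a, OF assms] by (intro Cauchy_if_dist_le) (auto simp: dist_real_def)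
  then show ?thesis
    unfolding cf_value_def by (simp add: Cauchy_convergent_iff convergent_LIMSEQ_iff)
qed

lemma cf_value_ge_1:
  assumes "\<And>i. 0 < a i"
  shows "1 \<le> cf_value a"
  by (rule LIMSEQ_le_const[OF cf_eval_tendsto_cf_value[of a, OF assms]])
     (use cf_eval_ge_1[of a, OF assms] in blast)

lemma cf_value_Suc:
  assumes "\<And>i. 0 < a i"
  shows "cf_value a = a 0 + 1 / cf_value (\<lambda>i. a (Suc i))"
proof (rule LIMSEQ_unique)
  show "(\<lambda>n. cf_eval a (Suc (Suc n)) 1) \<longlonglongrightarrow> cf_value a"
    using cf_eval_tendsto_cf_value[of a, OF assms] by (rule LIMSEQ_Suc)
  have "cf_value (\<lambda>i. a (Suc i)) \<noteq> 0" using cf_value_ge_1[of "\<lambda>i. a (Suc i)"] assms by force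
  moreover have "(\<lambda>n. cf_eval (\<lambda>i. a (Suc i)) (Suc n) 1) \<longlonglongrightarrow> cf_value (\<lambda>i. a (Suc i))"
    by (rule cf_eval_tendsto_cf_value) (rule assms)
  ultimately show "(\<lambda>n. cf_eval a (Suc (Suc n)) 1) \<longlonglongrightarrow> a 0 + 1 / cf_value (\<lambda>i. a (Suc i))"
    unfolding cf_eval.simps(2)[of a] by (intro tendsto_intros)
qed

lemma cf_value_minus_floor:
  assumes "\<And>i. 0 < a i"
  shows "0 < cf_value a - a 0" "cf_value a - a 0 < 1"
proof -
  let ?b = "\<lambda>i. a (Suc i)"
  have "1 \<le> cf_value (\<lambda>i. ?b (Suc i))" using cf_value_ge_1 assms by simp
  then have "0 < 1 / cf_value (\<lambda>i. ?b (Suc i))" by simp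
  moreover have "1 \<le> real_of_int (a 1)" using assms[of 1] by simp
  moreover have "cf_value ?b = a 1 + 1 / cf_value (\<lambda>i. ?b (Suc i))"
    using cf_value_Suc[of ?b] assms by simp
  ultimately have "cf_value ?b > 1" by linarith
  then show "0 < cf_value a - a 0" "cf_value a - a 0 < 1" using cf_value_Suc[of a, OF assms] by simp_all
qed

lemma floor_cf_value:
  assumes "\<And>i. 0 < a i"
  shows "\<lfloor>cf_value a\<rfloor> = a 0"
  using cf_value_minus_floor[of a, OF assms] by (intro floor_unique) simp_all

lemma cf_digit_cf_value:
  assumes "\<And>i. 0 < a i"
  shows "cf_digit (cf_value a) = a"
proof -
  have "cf_rem (cf_value a) k = cf_value (\<lambda>i. a (i + k))" for k
  proof (induction k)
    case (Suc k)
    let ?b = "\<lambda>i. a (i + k)"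
    have "cf_rem (cf_value a) (Suc k) = 1 / (cf_value ?b - ?b 0)"
      using Suc.IH floor_cf_value[of ?b] assms by simp
    also have "\<dots> = cf_value (\<lambda>i. ?b (Suc i))"
      using cf_value_Suc[of ?b] cf_value_ge_1[of "\<lambda>i. ?b (Suc i)"] assms by simp
    finally show ?case by simp
  qed simp
  then show ?thesis using floor_cf_value assms by (auto simp: cf_digit_def)
qed

text \<open>Descent on the denominator: if \<open>[a\<^sub>0; a\<^sub>1, \<dots>] = p/q\<close>, then
  \<open>[a\<^sub>1; a\<^sub>2, \<dots>] = q/r\<close> with \<open>0 < r < q\<close>.\<close>

lemma cf_value_irrational:
  assumes "\<And>i. 0 < a i"
  shows "cf_value a \<notin> \<rat>"
proof -
  have "cf_value a \<noteq> of_int p / of_nat q" if "\<And>i. 0 < a i" for a p q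
    using that
  proof (induction q arbitrary: a p rule: less_induct)
    case (less q)
    show ?case
    proof
      assume eq: "cf_value a = of_int p / of_nat q"
      then have "q > 0" using cf_value_ge_1[of a, OF less.prems] by (cases "q = 0") simp_all
      define r where "r = p - a 0 * int q"
      have frac: "cf_value a - a 0 = of_int r / of_nat q"
        using \<open>q > 0\<close> eq by (simp add: r_def field_simps)
      then have "0 < r" "r < int q"
        using cf_value_minus_floor[of a, OF less.prems] \<open>q > 0\<close>
        by (simp_all add: divide_less_eq zero_less_divide_iff)
      have "cf_value (\<lambda>i. a (Suc i)) = 1 / (cf_value a - a 0)"
        using cf_value_Suc[of a, OF less.prems] cf_value_ge_1[of "\<lambda>i. a (Suc i)"] less.prems by simp
      also have "\<dots> = of_int (int q) / of_nat (nat r)" using frac \<open>0 < r\<close> by simp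
      finally have "cf_value (\<lambda>i. a (Suc i)) = of_int (int q) / of_nat (nat r)" .
      moreover have "nat r < q" using \<open>0 < r\<close> \<open>r < int q\<close> by (simp add: nat_less_iff)
      ultimately show False using less.IH[of "nat r" "\<lambda>i. a (Suc i)" "int q"] less.prems by simp
    qed
  qed
  then show ?thesis using assms by (auto simp: Rats_eq_int_div_nat)
qed

section \<open>Periodic and aperiodic Jacobi sequences\<close>

lemma irrational_with_jacobi_seq:
  assumes "\<And>k. k \<in> S \<Longrightarrow> even k \<and> 0 < k"
  obtains x where "x \<notin> \<rat>" "cf_digit x = sign_digits S"
    "jacobi_seq x = (\<lambda>k. Some (if k \<in> S then -1 else 1))"
proof -
  have digits: "cf_digit (cf_value (sign_digits S)) = sign_digits S"
    by (rule cf_digit_cf_value[OF sign_digits_pos])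
  show ?thesis
  proof (rule that)
    show "cf_value (sign_digits S) \<notin> \<rat>" by (rule cf_value_irrational[OF sign_digits_pos])
    show "jacobi_seq (cf_value (sign_digits S)) = (\<lambda>k. Some (if k \<in> S then -1 else 1))"
      by (rule ext) (rule jacobi_seq_sign_digits[OF assms digits])
  qed (fact digits)
qed

lemma eventually_periodic_comp_inj:
  assumes "inj f"
  shows "eventually_periodic (f \<circ> g) \<longleftrightarrow> eventually_periodic g"
  using assms by (simp add: eventually_periodic_def inj_eq)

text \<open>If \<open>k = 2\<^sup>e \<in> S\<close> lies in the periodic range with period \<open>P\<close>, then so does
  \<open>k + 2kP = 2\<^sup>e (1 + 2P)\<close>, which is not a power of two.\<close>

lemma not_eventually_periodic_powers_of_two:
  fixes S :: "nat set"
  assumes "S \<subseteq> range (\<lambda>e. 2 ^ e)" "infinite S"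
  shows "\<not> eventually_periodic (\<lambda>k. k \<in> S)"
proof
  assume "eventually_periodic (\<lambda>k. k \<in> S)"
  then obtain N P where "0 < P" and per: "\<And>k. N \<le> k \<Longrightarrow> (k + P \<in> S) = (k \<in> S)"
    unfolding eventually_periodic_def by blast
  obtain k where "k \<in> S" "N \<le> k" using assms(2) by (auto simp: infinite_nat_iff_unbounded_le)
  have iterate: "(k + i * P \<in> S) = (k \<in> S)" for i
  proof (induction i)
    case (Suc i)
    have "k + Suc i * P = (k + i * P) + P" by simp
    then show ?case using per[of "k + i * P"] \<open>N \<le> k\<close> Suc.IH by (simp only:)
  qed simp
  then have "k * (1 + 2 * P) \<in> S" using \<open>k \<in> S\<close> iterate[of "2 * k"] by (simp add: algebra_simps)
  then obtain e where "k * (1 + 2 * P) = 2 ^ e" using assms(1) by auto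
  then have "1 + 2 * P dvd 2 ^ e" by (metis dvd_triv_right)
  then obtain i where i: "1 + 2 * P = 2 ^ i" by (auto simp: divides_primepow_nat)
  moreover have "i = 0" using arg_cong[where f = even, OF i] by simp
  ultimately show False using \<open>0 < P\<close> by simp
qed

lemma inj_power_two: "inj (\<lambda>e. 2 ^ e :: nat)"
  by (rule injI) simp

definition pow2_code :: "nat set \<Rightarrow> nat set" where
  "pow2_code B = (\<lambda>e. 2 ^ e) ` (range (\<lambda>j. 2 * j + 2) \<union> (\<lambda>j. 2 * j + 1) ` B)"

lemma pow2_code_iff: "2 ^ (2 * j + 1) \<in> pow2_code B \<longleftrightarrow> j \<in> B"
proof -
  have "2 ^ (2 * j + 1) \<in> pow2_code B \<longleftrightarrow>
        2 * j + 1 \<in> range (\<lambda>j. 2 * j + 2) \<union> (\<lambda>j. 2 * j + 1) ` B"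
    unfolding pow2_code_def by (rule inj_image_mem_iff[OF inj_power_two])
  also have "\<dots> \<longleftrightarrow> j \<in> B" by (auto dest: arg_cong[where f = even])
  finally show ?thesis .
qed

lemma inj_pow2_code: "inj pow2_code"
proof (rule injI)
  fix B1 B2 assume "pow2_code B1 = pow2_code B2"
  then have "j \<in> B1 \<longleftrightarrow> j \<in> B2" for j using pow2_code_iff[of j B1] pow2_code_iff[of j B2] by simp
  then show "B1 = B2" by blast
qed

lemma pow2_code_even_pos: "k \<in> pow2_code B \<Longrightarrow> even k \<and> 0 < k"
  by (auto simp: pow2_code_def)

lemma not_eventually_periodic_pow2_code: "\<not> eventually_periodic (\<lambda>k. k \<in> pow2_code B)"
proof (rule not_eventually_periodic_powers_of_two)
  show "pow2_code B \<subseteq> range (\<lambda>e. 2 ^ e)"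
    unfolding pow2_code_def by (rule image_mono) simp
  have "inj (\<lambda>j::nat. 2 * j + 2)" by (rule injI) simp
  then have "infinite (range (\<lambda>j::nat. 2 * j + 2) \<union> (\<lambda>j. 2 * j + 1) ` B)"
    by (simp add: range_inj_infinite)
  then show "infinite (pow2_code B)"
    unfolding pow2_code_def using finite_image_iff[OF inj_on_subset[OF inj_power_two]] by blast
qed

lemma uncountable_UNIV_nat_set: "uncountable (UNIV :: nat set set)"
proof
  assume "countable (UNIV :: nat set set)"
  then have "range (from_nat_into (UNIV :: nat set set)) = Pow UNIV" by simp
  then show False using Cantors_theorem by blast
qed

lemma exists_periodic_jacobi_seq:
  assumes "(L::nat) \<ge> 2" "even L"
  shows "\<exists>x::real. x \<notin> \<rat> \<and> (\<forall>i. cf_digit x i \<in> {1..4}) \<and>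
           eventually_periodic (cf_digit x) \<and>
           (\<exists>N. \<forall>j. jacobi_seq x (N + j) = (if j mod L = L - 1 then Some (-1) else Some 1))"
proof -
  define S where "S = {k. 0 < k \<and> L dvd k}"
  have "k \<in> S \<Longrightarrow> even k \<and> 0 < k" for k
    using assms(2) unfolding S_def by (auto elim: dvd_trans[rotated])
  then obtain x where "x \<notin> \<rat>" and digits: "cf_digit x = sign_digits S"
    and jacobi: "jacobi_seq x = (\<lambda>k. Some (if k \<in> S then -1 else 1))"
    by (rule irrational_with_jacobi_seq)
  have "sign_digits S (k + L) = sign_digits S k" if "3 \<le> k" for k
  proof -
    have shift: "k + L - 2 = (k - 2) + L" using that by simp
    have "(k + L - 2 \<in> S) = (k - 2 \<in> S)"
      unfolding shift S_def mem_Collect_eq dvd_add_triv_right_iff using that by simp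
    moreover have "(k + L \<in> S) = (k \<in> S)" using that by (simp add: S_def)
    ultimately show ?thesis unfolding sign_digits_def using that by simp
  qed
  then have "eventually_periodic (cf_digit x)"
    unfolding digits eventually_periodic_def using assms(1) by (intro exI[of _ 3] exI[of _ L]) auto
  moreover have "1 + j \<in> S \<longleftrightarrow> j mod L = L - 1" for j
    using assms(1) mod_Suc[of j L] by (auto simp: S_def dvd_eq_mod_eq_0 split: if_splits)
  then have "\<forall>j. jacobi_seq x (1 + j) = (if j mod L = L - 1 then Some (-1) else Some 1)"
    by (simp add: jacobi)
  moreover have "\<forall>i. cf_digit x i \<in> {1..4}" using digits sign_digits_range by simp
  ultimately show ?thesis
    using \<open>x \<notin> \<rat>\<close> by (intro exI[of _ x] conjI exI[of _ "1::nat"])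
qed

lemma uncountable_aperiodic_jacobi_seqs:
  "uncountable {J. \<not> eventually_periodic J \<and>
                   (\<exists>x::real. x \<notin> \<rat> \<and> (\<forall>i. cf_digit x i \<in> {1..4}) \<and> J = jacobi_seq x)}"
    (is "uncountable ?X")
proof
  define sign :: "bool \<Rightarrow> int option" where "sign b = Some (if b then -1 else 1)" for b
  define J where "J B = sign \<circ> (\<lambda>k. k \<in> pow2_code B)" for B
  have "inj sign" by (rule injI) (simp add: sign_def split: if_splits)
  have "J B \<in> ?X" for B
  proof -
    obtain x where "x \<notin> \<rat>" and digits: "cf_digit x = sign_digits (pow2_code B)"
      and jacobi: "jacobi_seq x = (\<lambda>k. Some (if k \<in> pow2_code B then -1 else 1))"
      by (rule irrational_with_jacobi_seq[OF pow2_code_even_pos])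
    have "\<not> eventually_periodic (J B)"
      unfolding J_def eventually_periodic_comp_inj[OF \<open>inj sign\<close>]
      by (rule not_eventually_periodic_pow2_code)
    moreover have "J B = jacobi_seq x" by (simp add: jacobi J_def sign_def comp_def)
    moreover have "\<forall>i. cf_digit x i \<in> {1..4}" using digits sign_digits_range by simp
    ultimately show ?thesis using \<open>x \<notin> \<rat>\<close> by blast
  qed
  then have range_J: "range J \<subseteq> ?X" by blast
  have "inj J"
  proof (rule injI)
    fix B1 B2 assume "J B1 = J B2"
    then have "pow2_code B1 = pow2_code B2"
      using \<open>inj sign\<close> by (auto simp: J_def fun_eq_iff inj_eq)
    then show "B1 = B2" by (rule injD[OF inj_pow2_code])
  qed
  assume "countable ?X"
  then have "countable (range J)" using range_J by (rule countable_subset[rotated])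
  then have "countable (UNIV :: nat set set)" using \<open>inj J\<close> by (rule countable_image_inj_on)
  then show False using uncountable_UNIV_nat_set by simp
qed

theorem theorem7:
  shows "(\<forall>L::nat. L \<ge> 2 \<longrightarrow> even L \<longrightarrow>
           (\<exists>x::real. x \<notin> \<rat> \<and> (\<forall>i. cf_digit x i \<in> {1..4}) \<and>
              eventually_periodic (cf_digit x) \<and>
              (\<exists>N. \<forall>j. jacobi_seq x (N + j) =
                        (if j mod L = L - 1 then Some (-1) else Some 1))))
       \<and> uncountable {J. \<not> eventually_periodic J \<and>
                       (\<exists>x::real. x \<notin> \<rat> \<and> (\<forall>i. cf_digit x i \<in> {1..4}) \<and>
                                J = jacobi_seq x)}"
  by (intro conjI allI impI exists_periodic_jacobi_seq uncountable_aperiodic_jacobi_seqs)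

end
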